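(* Let $\alpha\ge1$, $\rho\in[0,1]$ and $U\ge1$ be reals, and let $r:\mathbb R\to[0,\infty)$ be a nondecreasing, locally integrable function with $r(x)=0$ for $x<0$. For real $y$ let $\beta^{(y)}:=\frac{\alpha}{e^{\alpha}-1}\int_{y-1}^{y}r(x)e^{\alpha(y-x)}\,dx$, and define $$\mathrm{PRD}_a:=\int_{U-\rho}^{U}r(x)\,dx+\frac1\alpha\int_0^{U-\rho}r(x)\,dx-\frac1\alpha\int_0^{U-\rho}\beta^{(x)}\,dx+(1-\rho)\beta^{(U)}.$$ Then $$\mathrm{PRD}_a\le\int_{U-1}^{U-\rho}r(x)\phi_x\,dx+\int_{U-\rho}^{U}r(x)\psi_x\,dx+r(U-1)\,\Omega,$$ where $$\phi_x:=(1-\rho)\frac{\alpha}{e^{\alpha}-1}e^{\alpha(U-x)}+\frac1\alpha\cdot\frac{e^{\alpha}-e^{\alpha(U-\rho-x)}}{e^{\alpha}-1},\qquad \psi_x:=1+(1-\rho)\frac{\alpha}{e^{\alpha}-1}e^{\alpha(U-x)},$$ $$\Omega:=\frac1\alpha\cdot\frac{1}{e^{\alpha}-1}\left(\rho e^{\alpha}-\frac1\alpha\left(e^{\alpha}-e^{\alpha(1-\rho)}\right)\right).$$ *)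

theory Defs
  imports "HOL-Analysis.Analysis"
begin

definition beta_y :: "real \<Rightarrow> (real \<Rightarrow> real) \<Rightarrow> real \<Rightarrow> real" where
  "beta_y \<alpha> r y = \<alpha> / (exp \<alpha> - 1) * (LBINT x=y-1..y. r x * exp (\<alpha> * (y - x)))"

end

theory Submission
  imports Defs
begin

text \<open>
  Write V = U - \<rho> and w = beta_tail \<alpha> V, i.e. w(x) = (e^\<alpha> - e^(\<alpha>(V - x))) / (e^\<alpha> - 1),
  which is nonnegative exactly for x \<ge> V - 1. By Fubini, r(x) enters the integral of \<beta>
  over [0, V] with weight 1 - max(0, w(x)), so the integral of r - \<beta> over [0, V] is that of
  r max(0, w). On [U - 1, V] this is the 1/\<alpha>-part of \<phi>; on [0, U - 1] monotonicity bounds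
  r by r(U - 1), and the integral of w over [V - 1, U - 1] is exactly \<alpha>\<Omega>. Finally
  (1 - \<rho>) \<beta>(U) splits at V into the exponential parts of \<phi> and \<psi>.
\<close>

lemma set_integrable_mono_mult_continuous:
  fixes r g :: "real \<Rightarrow> real"
  assumes "mono r" and g: "continuous_on {a..b} g"
  shows "set_integrable lborel {a..b} (\<lambda>x. r x * g x)"
proof -
  obtain B where B: "\<And>x. x \<in> {a..b} \<Longrightarrow> \<bar>g x\<bar> \<le> B"
    using compact_imp_bounded[OF compact_continuous_image[OF g compact_Icc]]
    unfolding bounded_iff by (metis image_eqI real_norm_def)
  have r_bound: "\<bar>r x\<bar> \<le> \<bar>r a\<bar> + \<bar>r b\<bar>" if "x \<in> {a..b}" for x
    using that monoD[OF assms(1), of a x] monoD[OF assms(1), of x b] by auto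
  have "r \<in> borel_measurable borel"
    using assms(1) by (rule borel_measurable_mono)
  moreover have "set_borel_measurable lborel {a..b} g"
    using set_measurable_continuous_on[OF _ g] by (simp add: set_borel_measurable_def)
  ultimately have "set_borel_measurable lborel {a..b} (\<lambda>x. r x * g x)"
    unfolding set_borel_measurable_def by (simp add: mult.left_commute[of _ "r _"])
  moreover have "set_integrable lborel {a..b} (\<lambda>_. (\<bar>r a\<bar> + \<bar>r b\<bar>) * B)"
    by (rule borel_integrable_atLeastAtMost') simp
  moreover have "\<bar>r x * g x\<bar> \<le> \<bar>(\<bar>r a\<bar> + \<bar>r b\<bar>) * B\<bar>" if "x \<in> {a..b}" for x
  proof -
    have "\<bar>r x * g x\<bar> = \<bar>r x\<bar> * \<bar>g x\<bar>" by (rule abs_mult)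
    also have "\<dots> \<le> (\<bar>r a\<bar> + \<bar>r b\<bar>) * B"
      using r_bound[OF that] B[OF that] by (intro mult_mono) auto
    also have "\<dots> \<le> \<bar>(\<bar>r a\<bar> + \<bar>r b\<bar>) * B\<bar>" by (rule abs_ge_self)
    finally show ?thesis .
  qed
  ultimately show ?thesis
    using set_integrable_bound[where f="\<lambda>_. (\<bar>r a\<bar> + \<bar>r b\<bar>) * B"
        and g="\<lambda>x. r x * g x" and M=lborel and A="{a..b}"] by (simp add: AE_I2)
qed

lemma set_integral_Icc_split:
  fixes f :: "real \<Rightarrow> 'a::{banach, second_countable_topology}"
  assumes "a \<le> b" "b \<le> c" "set_integrable lborel {a..c} f"
  shows "(LBINT x:{a..c}. f x) = (LBINT x:{a..b}. f x) + (LBINT x:{b..c}. f x)"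
proof -
  have "{a..c} = {a..b} \<union> {b..c}" using assms by auto
  moreover have "AE x in lborel. \<not> (x \<in> {a..b} \<and> x \<in> {b..c})"
    using AE_lborel_singleton[of b] by eventually_elim auto
  ultimately show ?thesis
    using assms by (simp add: set_integral_Un_AE set_integrable_subset)
qed

lemma set_integral_exp_affine:
  fixes \<alpha> x s t :: real
  assumes "\<alpha> \<noteq> 0" and "s \<le> t"
  shows "(LBINT y:{s..t}. exp (\<alpha> * (y - x))) = (exp (\<alpha> * (t - x)) - exp (\<alpha> * (s - x))) / \<alpha>"
proof -
  have "((\<lambda>y. exp (\<alpha> * (y - x)) / \<alpha>) has_real_derivative exp (\<alpha> * (y - x))) (at y within {s..t})" for y
    using assms by (auto intro!: derivative_eq_intros)
  then have "(LBINT y:{s..t}. exp (\<alpha> * (y - x))) = exp (\<alpha> * (t - x)) / \<alpha> - exp (\<alpha> * (s - x)) / \<alpha>"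
    unfolding set_lebesgue_integral_def
    by (intro integral_FTC_atLeastAtMost assms continuous_intros)
       (simp add: has_real_derivative_iff_has_vector_derivative)
  then show ?thesis by (simp add: diff_divide_distrib)
qed

lemma monotone_weighted_integral_le:
  fixes r m :: "real \<Rightarrow> real"
  assumes "mono r" and "0 \<le> r b" and m: "continuous_on UNIV m"
    and m_nonneg: "\<And>x. 0 \<le> m x" and m_zero: "\<And>x. x < c \<Longrightarrow> m x = 0"
    and "a \<le> b" "b \<le> d" "c \<le> b"
  shows "(LBINT x:{a..d}. r x * m x) \<le> (LBINT x:{b..d}. r x * m x) + r b * (LBINT x:{c..b}. m x)"
proof -
  have int: "set_integrable lborel {s..t} (\<lambda>x. r x * m x)" for s t
    using set_integrable_mono_mult_continuous[OF assms(1)] m continuous_on_subset by blast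
  have int_m: "set_integrable lborel {s..t} m" for s t
    using m continuous_on_subset borel_integrable_atLeastAtMost' by blast
  have "(LBINT x:{a..b}. r x * m x) \<le> (LBINT x:{a..b}. r b * m x)"
    using int int_m monoD[OF assms(1)] m_nonneg by (intro set_integral_mono mult_right_mono) auto
  also have "\<dots> = r b * (LBINT x:{a..b}. m x)" by simp
  also have "(LBINT x:{a..b}. m x) \<le> (LBINT x:{c..b}. m x)"
    unfolding set_lebesgue_integral_def
    using int_m[unfolded set_integrable_def] m_nonneg m_zero
    by (intro integral_mono) (auto simp: indicator_def not_le)
  finally have "(LBINT x:{a..b}. r x * m x) \<le> r b * (LBINT x:{c..b}. m x)"
    using assms(2) by (simp add: mult_left_mono)
  then show ?thesis
    using set_integral_Icc_split[OF assms(6,7) int] by simp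
qed

definition beta_tail :: "real \<Rightarrow> real \<Rightarrow> real \<Rightarrow> real" where
  "beta_tail \<alpha> V x = (exp \<alpha> - exp (\<alpha> * (V - x))) / (exp \<alpha> - 1)"

lemma continuous_on_beta_tail [continuous_intros]:
  "continuous_on S f \<Longrightarrow> continuous_on S (\<lambda>x. beta_tail \<alpha> V (f x))"
  unfolding beta_tail_def divide_inverse by (intro continuous_intros)

lemma beta_tail_nonneg_iff:
  assumes "\<alpha> > 0"
  shows "0 \<le> beta_tail \<alpha> V x \<longleftrightarrow> V - 1 \<le> x"
proof -
  have "exp \<alpha> - 1 > 0" using assms by simp
  then have "0 \<le> beta_tail \<alpha> V x \<longleftrightarrow> \<alpha> * (V - x) \<le> \<alpha> * 1"
    by (simp add: beta_tail_def zero_le_divide_iff)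
  also have "\<dots> \<longleftrightarrow> V - 1 \<le> x"
    using assms by (simp only: mult_le_cancel_left_pos) linarith
  finally show ?thesis .
qed

lemma beta_kernel_mass:
  assumes "\<alpha> > 0" and "x \<le> V"
  shows "\<alpha> / (exp \<alpha> - 1) * (LBINT y:{x..min V (x + 1)}. exp (\<alpha> * (y - x)))
           = 1 - max 0 (beta_tail \<alpha> V x)"
proof -
  have E: "exp \<alpha> - 1 > 0" using assms by simp
  show ?thesis
  proof (cases "V \<le> x + 1")
    case True
    then have "0 \<le> beta_tail \<alpha> V x" using beta_tail_nonneg_iff[OF assms(1)] by simp
    moreover have "(LBINT y:{x..min V (x + 1)}. exp (\<alpha> * (y - x))) = (exp (\<alpha> * (V - x)) - 1) / \<alpha>"
      using True assms by (simp add: set_integral_exp_affine min_def)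
    ultimately show ?thesis
      using E assms by (simp add: beta_tail_def field_simps)
  next
    case False
    then have "\<not> 0 \<le> beta_tail \<alpha> V x" using beta_tail_nonneg_iff[OF assms(1)] by simp
    moreover have "(LBINT y:{x..min V (x + 1)}. exp (\<alpha> * (y - x))) = (exp \<alpha> - 1) / \<alpha>"
      using False assms by (simp add: set_integral_exp_affine min_def)
    ultimately show ?thesis
      using E assms by (simp add: max_def)
  qed
qed

definition beta_kernel :: "real \<Rightarrow> (real \<Rightarrow> real) \<Rightarrow> real \<Rightarrow> real \<Rightarrow> real \<Rightarrow> real" where
  "beta_kernel \<alpha> r V x y = (if 0 \<le> y \<and> y \<le> V \<and> y - 1 \<le> x \<and> x \<le> y
                              then \<alpha> / (exp \<alpha> - 1) * r x * exp (\<alpha> * (y - x)) else 0)"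

lemma beta_kernel_integrable:
  assumes \<alpha>: "\<alpha> > 0" and mono: "mono r" and r_nonneg: "\<And>x. 0 \<le> r x"
  shows "integrable (lborel \<Otimes>\<^sub>M lborel) (\<lambda>(x, y). beta_kernel \<alpha> r V x y)"
proof -
  have [measurable]: "r \<in> borel_measurable borel" using mono by (rule borel_measurable_mono)
  define c where "c = \<alpha> / (exp \<alpha> - 1)"
  define B where "B = c * r V * exp \<alpha>"
  have c: "c > 0" using \<alpha> by (simp add: c_def)
  have bound: "\<bar>beta_kernel \<alpha> r V x y\<bar> \<le> B" for x y
  proof (cases "0 \<le> y \<and> y \<le> V \<and> y - 1 \<le> x \<and> x \<le> y")
    case True
    have "r x * exp (\<alpha> * (y - x)) \<le> r V * exp \<alpha>"
      using True \<alpha> monoD[OF mono, of x V] by (intro mult_mono) (auto simp: r_nonneg)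
    then show ?thesis
      using True c r_nonneg[of x] by (simp add: beta_kernel_def c_def[symmetric] B_def mult.assoc)
  qed (use c r_nonneg[of V] in \<open>auto simp: beta_kernel_def B_def\<close>)
  show ?thesis
  proof (rule integrableI_bounded_set[where A="{-1..V} \<times> {0..V}" and B=B])
    show "emeasure (lborel \<Otimes>\<^sub>M lborel) ({-1..V} \<times> {0..V}) < \<infinity>"
      by (simp add: lborel.emeasure_pair_measure_Times ennreal_mult_less_top emeasure_lborel_Icc_eq)
    show "AE z\<in>{-1..V} \<times> {0..V} in lborel \<Otimes>\<^sub>M lborel. norm (case z of (x, y) \<Rightarrow> beta_kernel \<alpha> r V x y) \<le> B"
      using bound by (intro AE_I2) (simp add: split_beta)
    show "AE z in lborel \<Otimes>\<^sub>M lborel. z \<notin> {-1..V} \<times> {0..V} \<longrightarrow> (case z of (x, y) \<Rightarrow> beta_kernel \<alpha> r V x y) = 0"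
      by (intro AE_I2) (auto simp: beta_kernel_def split: if_splits)
  qed (unfold beta_kernel_def, measurable)
qed

lemma set_integral_beta_y:
  fixes \<alpha> V :: real and r :: "real \<Rightarrow> real"
  assumes \<alpha>: "\<alpha> > 0" and mono: "mono r" and r_neg: "\<And>x. x < 0 \<Longrightarrow> r x = 0"
  shows "(LBINT y:{0..V}. beta_y \<alpha> r y) = (LBINT x:{0..V}. r x * (1 - max 0 (beta_tail \<alpha> V x)))"
proof -
  let ?G = "beta_kernel \<alpha> r V"
  have "0 \<le> r x" for x
    using monoD[OF mono, of "min x (-1)" x] r_neg[of "min x (-1)"] by simp
  then have "(\<integral>y. (\<integral>x. ?G x y \<partial>lborel) \<partial>lborel) = (\<integral>x. (\<integral>y. ?G x y \<partial>lborel) \<partial>lborel)"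
    using beta_kernel_integrable[OF \<alpha> mono] by (intro lborel_pair.Fubini_integral) auto
  moreover have "(\<integral>x. ?G x y \<partial>lborel) = indicator {0..V} y * beta_y \<alpha> r y" for y
  proof -
    have "indicator {0..V} y * beta_y \<alpha> r y = (\<integral>x. indicator {0..V} y * (\<alpha> / (exp \<alpha> - 1))
             * (indicator {y-1..y} x * (r x * exp (\<alpha> * (y - x)))) \<partial>lborel)"
      by (simp add: beta_y_def interval_integral_Icc set_lebesgue_integral_def)
    also have "\<dots> = (\<integral>x. ?G x y \<partial>lborel)"
      by (rule Bochner_Integration.integral_cong) (auto simp: beta_kernel_def indicator_def)
    finally show ?thesis ..
  qed
  moreover have "(\<integral>y. ?G x y \<partial>lborel) = indicator {0..V} x * (r x * (1 - max 0 (beta_tail \<alpha> V x)))" for x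
  proof (cases "0 \<le> x \<and> x \<le> V")
    case True
    have "(\<integral>y. ?G x y \<partial>lborel) = (\<integral>y. \<alpha> / (exp \<alpha> - 1) * r x
             * (indicator {x..min V (x + 1)} y *\<^sub>R exp (\<alpha> * (y - x))) \<partial>lborel)"
      by (rule Bochner_Integration.integral_cong) (use True in \<open>auto simp: beta_kernel_def indicator_def\<close>)
    also have "\<dots> = r x * (\<alpha> / (exp \<alpha> - 1) * (LBINT y:{x..min V (x + 1)}. exp (\<alpha> * (y - x))))"
      by (simp add: set_lebesgue_integral_def)
    finally show ?thesis
      using True beta_kernel_mass[OF \<alpha>, of x V] by (simp only: indicator_simps) simp
  next
    case False
    then have "?G x = (\<lambda>_. 0)" by (auto simp: beta_kernel_def r_neg)
    then show ?thesis using False by simp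
  qed
  ultimately show ?thesis
    by (simp add: set_lebesgue_integral_def)
qed

lemma set_integral_diff_beta_y:
  fixes \<alpha> V :: real and r :: "real \<Rightarrow> real"
  assumes "\<alpha> > 0" and "mono r" and "\<And>x. x < 0 \<Longrightarrow> r x = 0"
  shows "(LBINT x:{0..V}. r x) - (LBINT y:{0..V}. beta_y \<alpha> r y)
           = (LBINT x:{0..V}. r x * max 0 (beta_tail \<alpha> V x))"
proof -
  have "continuous_on UNIV (\<lambda>x. 1 - max 0 (beta_tail \<alpha> V x))"
    by (intro continuous_intros)
  then have "set_integrable lborel {0..V} (\<lambda>x. r x * (1 - max 0 (beta_tail \<alpha> V x)))"
    by (intro set_integrable_mono_mult_continuous assms(2)) (rule continuous_on_subset, auto)
  moreover have "set_integrable lborel {0..V} r"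
    using set_integrable_mono_mult_continuous[OF assms(2), of 0 V "\<lambda>_. 1"] by simp
  ultimately have "(LBINT x:{0..V}. r x) - (LBINT x:{0..V}. r x * (1 - max 0 (beta_tail \<alpha> V x)))
      = (LBINT x:{0..V}. r x - r x * (1 - max 0 (beta_tail \<alpha> V x)))"
    by (simp add: set_integral_diff(2))
  also have "\<dots> = (LBINT x:{0..V}. r x * max 0 (beta_tail \<alpha> V x))"
    by (simp add: algebra_simps)
  finally show ?thesis
    by (simp only: set_integral_beta_y[OF assms])
qed

lemma set_integral_beta_tail:
  assumes "\<alpha> > 0" and "0 \<le> \<rho>"
  shows "(LBINT x:{U-\<rho>-1..U-1}. beta_tail \<alpha> (U - \<rho>) x)
           = (\<rho> * exp \<alpha> - (exp \<alpha> - exp (\<alpha> * (1 - \<rho>))) / \<alpha>) / (exp \<alpha> - 1)"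
proof -
  define F where "F x = (exp \<alpha> * x + exp (\<alpha> * (U - \<rho> - x)) / \<alpha>) / (exp \<alpha> - 1)" for x
  have "((\<lambda>x. exp \<alpha> * x + exp (\<alpha> * (U - \<rho> - x)) / \<alpha>) has_real_derivative
          exp \<alpha> - exp (\<alpha> * (U - \<rho> - x))) (at x within {U-\<rho>-1..U-1})" for x
    using assms by (auto intro!: derivative_eq_intros)
  then have "(F has_real_derivative beta_tail \<alpha> (U - \<rho>) x) (at x within {U-\<rho>-1..U-1})" for x
    unfolding F_def beta_tail_def by (rule DERIV_cdivide)
  then have "(LBINT x:{U-\<rho>-1..U-1}. beta_tail \<alpha> (U - \<rho>) x) = F (U - 1) - F (U - \<rho> - 1)"
    unfolding set_lebesgue_integral_def beta_tail_def using assms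
    by (intro integral_FTC_atLeastAtMost continuous_intros)
       (auto simp: has_real_derivative_iff_has_vector_derivative beta_tail_def)
  also have "\<dots> = ((exp \<alpha> * (U - 1) + exp (\<alpha> * (1 - \<rho>)) / \<alpha>)
                      - (exp \<alpha> * (U - \<rho> - 1) + exp \<alpha> / \<alpha>)) / (exp \<alpha> - 1)"
    by (simp add: F_def diff_divide_distrib)
  also have "\<dots> = (\<rho> * exp \<alpha> - (exp \<alpha> - exp (\<alpha> * (1 - \<rho>))) / \<alpha>) / (exp \<alpha> - 1)"
    by (simp add: algebra_simps diff_divide_distrib)
  finally show ?thesis .
qed

lemma set_integral_mult_max_beta_tail_le:
  fixes \<alpha> \<rho> U :: real and r :: "real \<Rightarrow> real"
  assumes "\<alpha> > 0" and "0 \<le> \<rho>" and "\<rho> \<le> 1" and "1 \<le> U"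
    and "mono r" and "\<And>x. 0 \<le> r x"
  shows "(LBINT x:{0..U-\<rho>}. r x * max 0 (beta_tail \<alpha> (U - \<rho>) x))
           \<le> (LBINT x:{U-1..U-\<rho>}. r x * beta_tail \<alpha> (U - \<rho>) x)
             + r (U - 1) * ((\<rho> * exp \<alpha> - (exp \<alpha> - exp (\<alpha> * (1 - \<rho>))) / \<alpha>) / (exp \<alpha> - 1))"
proof -
  let ?m = "\<lambda>x. max 0 (beta_tail \<alpha> (U - \<rho>) x)"
  have m_eq: "?m x = beta_tail \<alpha> (U - \<rho>) x" if "U - \<rho> - 1 \<le> x" for x
    using that beta_tail_nonneg_iff[OF assms(1)] by simp
  have "(LBINT x:{0..U-\<rho>}. r x * ?m x) \<le> (LBINT x:{U-1..U-\<rho>}. r x * ?m x) + r (U - 1) * (LBINT x:{U-\<rho>-1..U-1}. ?m x)"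
  proof (rule monotone_weighted_integral_le)
    show "continuous_on UNIV ?m" by (intro continuous_intros)
    show "?m x = 0" if "x < U - \<rho> - 1" for x
      using that beta_tail_nonneg_iff[OF assms(1), of "U - \<rho>" x] by (simp add: max_def)
  qed (use assms in auto)
  also have "(LBINT x:{U-1..U-\<rho>}. r x * ?m x) = (LBINT x:{U-1..U-\<rho>}. r x * beta_tail \<alpha> (U - \<rho>) x)"
    using m_eq assms by (intro set_lebesgue_integral_cong) auto
  also have "(LBINT x:{U-\<rho>-1..U-1}. ?m x) = (LBINT x:{U-\<rho>-1..U-1}. beta_tail \<alpha> (U - \<rho>) x)"
    using m_eq by (intro set_lebesgue_integral_cong) auto
  finally show ?thesis
    unfolding set_integral_beta_tail[OF assms(1,2)] .
qed

lemma set_integral_diff_beta_y_le: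
  fixes \<alpha> \<rho> U :: real and r :: "real \<Rightarrow> real"
  assumes \<alpha>: "\<alpha> > 0" and "0 \<le> \<rho>" and "\<rho> \<le> 1" and "1 \<le> U"
    and "mono r" and "\<And>x. 0 \<le> r x" and "\<And>x. x < 0 \<Longrightarrow> r x = 0"
  shows "1/\<alpha> * (LBINT x:{0..U-\<rho>}. r x) - 1/\<alpha> * (LBINT x:{0..U-\<rho>}. beta_y \<alpha> r x)
           \<le> 1/\<alpha> * (LBINT x:{U-1..U-\<rho>}. r x * beta_tail \<alpha> (U - \<rho>) x)
             + r (U - 1) * (1/\<alpha> * (1 / (exp \<alpha> - 1)) *
                 (\<rho> * exp \<alpha> - 1/\<alpha> * (exp \<alpha> - exp (\<alpha> * (1 - \<rho>)))))"
    (is "?D \<le> 1/\<alpha> * ?W + r (U - 1) * ?\<Omega>")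
proof -
  have "(LBINT x:{0..U-\<rho>}. r x) - (LBINT x:{0..U-\<rho>}. beta_y \<alpha> r x)
      \<le> ?W + r (U - 1) * ((\<rho> * exp \<alpha> - (exp \<alpha> - exp (\<alpha> * (1 - \<rho>))) / \<alpha>) / (exp \<alpha> - 1))"
    using set_integral_diff_beta_y[OF \<alpha> assms(5,7), of "U - \<rho>"]
      set_integral_mult_max_beta_tail_le[OF assms(1-6)] by linarith
  then have "?D \<le> 1/\<alpha> * (?W + r (U - 1) * ((\<rho> * exp \<alpha> - (exp \<alpha> - exp (\<alpha> * (1 - \<rho>))) / \<alpha>) / (exp \<alpha> - 1)))"
    unfolding right_diff_distrib[symmetric] by (rule mult_left_mono) (use \<alpha> in simp)
  also have "\<dots> = 1/\<alpha> * ?W + r (U - 1) * ?\<Omega>"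
    by (simp add: distrib_left)
  finally show ?thesis .
qed

theorem lemmaB3:
  fixes \<alpha> \<rho> U :: real and r :: "real \<Rightarrow> real"
  assumes "\<alpha> \<ge> 1" and "0 \<le> \<rho>" and "\<rho> \<le> 1" and "U \<ge> 1"
    and "\<And>x. r x \<ge> 0"
    and "mono r"
    and "\<And>a b. set_integrable lborel {a..b} r"
    and "\<And>x. x < 0 \<Longrightarrow> r x = 0"
  shows "(LBINT x=U-\<rho>..U. r x) + 1/\<alpha> * (LBINT x=0..U-\<rho>. r x)
           - 1/\<alpha> * (LBINT x=0..U-\<rho>. beta_y \<alpha> r x) + (1 - \<rho>) * beta_y \<alpha> r U
         \<le> (LBINT x=U-1..U-\<rho>. r x * ((1 - \<rho>) * (\<alpha> / (exp \<alpha> - 1)) * exp (\<alpha> * (U - x))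
                 + 1/\<alpha> * ((exp \<alpha> - exp (\<alpha> * (U - \<rho> - x))) / (exp \<alpha> - 1))))
           + (LBINT x=U-\<rho>..U. r x * (1 + (1 - \<rho>) * (\<alpha> / (exp \<alpha> - 1)) * exp (\<alpha> * (U - x))))
           + r (U - 1) * (1/\<alpha> * (1 / (exp \<alpha> - 1)) *
                 (\<rho> * exp \<alpha> - 1/\<alpha> * (exp \<alpha> - exp (\<alpha> * (1 - \<rho>)))))"
proof -
  have \<alpha>: "\<alpha> > 0" using assms(1) by simp
  define P where "P x = (1 - \<rho>) * (\<alpha> / (exp \<alpha> - 1)) * exp (\<alpha> * (U - x))" for x
  define w where "w = beta_tail \<alpha> (U - \<rho>)"
  have int: "set_integrable lborel {a..b} (\<lambda>x. r x * g x)" if "continuous_on UNIV g" for a b g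
    using set_integrable_mono_mult_continuous[OF assms(6)] that continuous_on_subset by blast
  have cont: "continuous_on UNIV P" "continuous_on UNIV w"
    unfolding P_def w_def by (intro continuous_intros)+
  have beta_U: "(1 - \<rho>) * beta_y \<alpha> r U = (LBINT x:{U-1..U-\<rho>}. r x * P x) + (LBINT x:{U-\<rho>..U}. r x * P x)"
  proof -
    have "(1 - \<rho>) * beta_y \<alpha> r U = (LBINT x:{U-1..U}. r x * P x)"
      by (simp add: beta_y_def P_def interval_integral_Icc mult_ac flip: set_integral_mult_right)
    then show ?thesis using set_integral_Icc_split[OF _ _ int[OF cont(1)]] assms(2,3) by simp
  qed
  have "(LBINT x:{U-1..U-\<rho>}. r x * (P x + 1/\<alpha> * w x))
      = (LBINT x:{U-1..U-\<rho>}. r x * P x) + 1/\<alpha> * (LBINT x:{U-1..U-\<rho>}. r x * w x)"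
    using int[OF cont(1)] int[OF cont(2)] by (simp add: distrib_left set_integral_add(2))
  moreover have "(LBINT x:{U-\<rho>..U}. r x * (1 + P x))
      = (LBINT x:{U-\<rho>..U}. r x) + (LBINT x:{U-\<rho>..U}. r x * P x)"
    using assms(7) int[OF cont(1)] by (simp add: distrib_left set_integral_add(2))
  moreover have "1/\<alpha> * (LBINT x:{0..U-\<rho>}. r x) - 1/\<alpha> * (LBINT x:{0..U-\<rho>}. beta_y \<alpha> r x)
      \<le> 1/\<alpha> * (LBINT x:{U-1..U-\<rho>}. r x * w x)
        + r (U - 1) * (1/\<alpha> * (1 / (exp \<alpha> - 1)) *
            (\<rho> * exp \<alpha> - 1/\<alpha> * (exp \<alpha> - exp (\<alpha> * (1 - \<rho>)))))"
    unfolding w_def by (rule set_integral_diff_beta_y_le) (use \<alpha> assms in auto)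
  \<comment> \<open>the lower bound \<open>0\<close> here is the numeral of type \<open>ereal\<close>, not \<open>ereal 0\<close>\<close>
  moreover have "(LBINT x=0..U-\<rho>. f x) = (LBINT x:{0..U-\<rho>}. f x)" for f :: "real \<Rightarrow> real"
    using interval_integral_Icc[of 0 "U - \<rho>" f] assms(3,4) by (simp add: zero_ereal_def)
  ultimately show ?thesis
    using beta_U assms(2-4) unfolding P_def w_def beta_tail_def
    by (simp only: interval_integral_Icc)
qed

end
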